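(* Let $G=(V,E)$ be the king grid and let $S\subset V$ be a locating-paired-dominating set of $G$. Fix any perfect matching $M$ of the induced subgraph $G[S]$, and for $v\in S$ let $m(v)$ denote the partner of $v$ in $M$. Define $S_1=\{v\in S : |N(v)\cap N(m(v))|=2\}$ and $S_2=\{v\in S : |N(v)\cap N(m(v))|=4\}$. Then $$\frac{14}{3}D(S_1)+\frac{9}{2}D(S_2)\ge 1.$$
   Context: The king grid is the infinite graph with vertex set $\mathbb{Z}\times\mathbb{Z}$ in which two distinct vertices are adjacent iff their Euclidean distance is at most $\sqrt2$. $N(v)$ is the open neighborhood of $v$ and $N[v]=N(v)\cup\{v\}$. A set $S\subset V$ is a locating-paired-dominating set (LPDS) if (i) every vertex $v\in V$ satisfies $N[v]\cap S\neq\emptyset$, (ii) the induced subgraph $G[S]$ has a perfect matching, and (iii) for any two distinct vertices $u,v\in V\setminus S$, $N(u)\cap S\neq N(v)\cap S$. For $k\ge 0$ and $u\in V$, $N^k[u]=\{x\in V: d(u,x)\le k\}$, where $d$ is graph distance. The density of a set $A\subset V$ is $D(A)=\limsup_{k\to\infty}\frac{|A\cap N^k[u]|}{|N^k[u]|}$ (independent of the choice of $u$). Note $S_1$ consists of vertices whose partner is at Euclidean distance $\sqrt2$ and $S_2$ of those whose partner is at distance $1$; $S=S_1\cup S_2$ disjointly. *)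

theory Defs
  imports "HOL-Library.Liminf_Limsup" "HOL-Library.Extended_Real"
begin

type_synonym vtx = "int \<times> int"

definition king_adj :: "vtx \<Rightarrow> vtx \<Rightarrow> bool" where
  "king_adj u v \<longleftrightarrow> u \<noteq> v \<and> (fst u - fst v)\<^sup>2 + (snd u - snd v)\<^sup>2 \<le> 2"

definition king_edges :: "(vtx \<times> vtx) set" where
  "king_edges = {(u, v). king_adj u v}"

definition nbh :: "vtx \<Rightarrow> vtx set" where
  "nbh v = {w. king_adj v w}"

definition cnbh :: "vtx \<Rightarrow> vtx set" where
  "cnbh v = insert v (nbh v)"

text \<open>m is a perfect matching of the induced subgraph G[S], given as the partner map.\<close>
definition perfect_matching_on :: "vtx set \<Rightarrow> (vtx \<Rightarrow> vtx) \<Rightarrow> bool" where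
  "perfect_matching_on S m \<longleftrightarrow> (\<forall>v\<in>S. m v \<in> S \<and> king_adj v (m v) \<and> m (m v) = v)"

definition is_LPDS :: "vtx set \<Rightarrow> bool" where
  "is_LPDS S \<longleftrightarrow>
     (\<forall>v. cnbh v \<inter> S \<noteq> {}) \<and>
     (\<exists>m. perfect_matching_on S m) \<and>
     (\<forall>u v. u \<notin> S \<longrightarrow> v \<notin> S \<longrightarrow> u \<noteq> v \<longrightarrow> nbh u \<inter> S \<noteq> nbh v \<inter> S)"

definition gball :: "nat \<Rightarrow> vtx \<Rightarrow> vtx set" where
  "gball k u = {x. \<exists>n\<le>k. (u, x) \<in> king_edges ^^ n}"

text \<open>Density, computed with centre (0,0) (the paper notes independence of the centre).\<close>
definition density :: "vtx set \<Rightarrow> ereal" where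
  "density A = limsup (\<lambda>k. ereal (real (card (A \<inter> gball k (0,0))) / real (card (gball k (0,0)))))"

end

(*
  Discharging.  Every vertex u sends charge 1, split equally among the
  |N[u] \<inter> S| >= 1 vertices of S dominating it, and s \<in> S collects its share
  \<Sum>_{u \<in> N[s]} 1/|N[u] \<inter> S|.  Counting the charge sent from a square of
  the grid, which all lands in the square one step larger, shows that the
  shares have average at least 1, so the theorem follows from: the share of
  s \<in> S_1 is at most 14/3 and that of s \<in> S_2 at most 9/2.

  Let p = m(s).  Besides s and p (each dominated at least twice), N(s) splits
  into the common neighbours N(s) \<inter> N(p) and the private neighbours
  N(s) - N[p].  Common neighbours are dominated at least twice, private ones
  at least once, and since S is locating, at most one vertex of each group
  attains the minimum.  This gives 9/2 when p is orthogonal to s (four common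
  neighbours) and 29/6 when p is diagonal; in the diagonal case a short
  geometric argument shows that some private neighbour is dominated three
  times, which lowers the bound to 14/3.
*)
theory Submission
  imports Defs "HOL-Analysis.Extended_Real_Limits" "HOL-Real_Asymp.Real_Asymp"
begin

section \<open>The king grid\<close>

lemma int_sum_squares_le_2_iff:
  "(x::int)\<^sup>2 + y\<^sup>2 \<le> 2 \<longleftrightarrow> \<bar>x\<bar> \<le> 1 \<and> \<bar>y\<bar> \<le> 1"
proof -
  have sq: "\<bar>z\<bar> \<le> 1 \<longleftrightarrow> z\<^sup>2 \<le> 1" "\<bar>z\<bar> \<le> 1 \<or> 4 \<le> z\<^sup>2" for z :: int
    using abs_le_square_iff[of z 1] abs_le_square_iff[of 2 z] by auto
  show ?thesis
    using sq[of x] sq[of y] zero_le_power2[of x] zero_le_power2[of y] by linarith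
qed

lemma king_adj_iff:
  "king_adj (a, b) (c, d) \<longleftrightarrow> (a, b) \<noteq> (c, d) \<and> \<bar>a - c\<bar> \<le> 1 \<and> \<bar>b - d\<bar> \<le> 1"
  by (simp add: king_adj_def int_sum_squares_le_2_iff)

lemma king_adj_sym: "king_adj u v \<Longrightarrow> king_adj v u"
  by (auto simp: king_adj_def power2_commute)

lemma king_adj_irrefl [simp]: "\<not> king_adj u u"
  by (simp add: king_adj_def)

lemma abs_diff_le_1_iff: "\<bar>(a::int) - c\<bar> \<le> 1 \<longleftrightarrow> c \<in> {a - 1, a, a + 1}"
  by auto

lemma nbh_eq: "nbh (a, b) = {a - 1, a, a + 1} \<times> {b - 1, b, b + 1} - {(a, b)}"
proof (rule set_eqI)
  fix x :: vtx
  obtain c d where x: "x = (c, d)"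
    by fastforce
  show "x \<in> nbh (a, b) \<longleftrightarrow> x \<in> {a - 1, a, a + 1} \<times> {b - 1, b, b + 1} - {(a, b)}"
    unfolding x nbh_def mem_Collect_eq king_adj_iff abs_diff_le_1_iff mem_Times_iff Diff_iff
    by auto
qed

lemma card_nbh: "card (nbh v) = 8"
  by (cases v) (simp add: nbh_eq card_cartesian_product)

lemma finite_nbh: "finite (nbh v)"
  by (cases v) (simp add: nbh_eq)

lemma not_mem_nbh_self [simp]: "v \<notin> nbh v"
  by (simp add: nbh_def king_adj_irrefl)

lemma finite_cnbh: "finite (cnbh v)"
  by (simp add: cnbh_def finite_nbh)

lemma nbh_sym: "u \<in> nbh v \<longleftrightarrow> v \<in> nbh u"
  by (auto simp: nbh_def king_adj_sym)

lemma cnbh_sym: "u \<in> cnbh v \<longleftrightarrow> v \<in> cnbh u"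
  by (auto simp: cnbh_def nbh_sym)

section \<open>Symmetries of the grid\<close>

text \<open>Reflections in the axes and translations suffice: every adjacent pair is the image
  of \<open>(0, 0)\<close> and one of \<open>(1, 1)\<close>, \<open>(1, 0)\<close>, \<open>(0, 1)\<close> (\<open>adjacent_cases\<close>).\<close>

definition grid_iso :: "vtx \<Rightarrow> int \<Rightarrow> int \<Rightarrow> vtx \<Rightarrow> vtx" where
  "grid_iso s a b = (\<lambda>(i, j). (fst s + a * i, snd s + b * j))"

lemma grid_iso_origin: "grid_iso s a b (0, 0) = s"
  by (simp add: grid_iso_def)

context
  fixes a b :: int
  assumes a: "\<bar>a\<bar> = 1" and b: "\<bar>b\<bar> = 1"
begin

lemma king_adj_grid_iso: "king_adj (grid_iso s a b x) (grid_iso s a b y) \<longleftrightarrow> king_adj x y"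
  using a b by (cases x; cases y) (auto simp: grid_iso_def king_adj_iff abs_mult right_diff_distrib[symmetric])

lemma bij_grid_iso: "bij (grid_iso s a b)"
proof (rule bijI)
  show "inj (grid_iso s a b)"
    using a b by (auto simp: inj_def grid_iso_def)
  have "a * a = 1" "b * b = 1"
    using a b abs_mult_self_eq[of a] abs_mult_self_eq[of b] by simp_all
  then have "grid_iso s a b (a * (u - fst s), b * (v - snd s)) = (u, v)" for u v
    by (simp add: grid_iso_def mult.assoc[symmetric])
  then show "surj (grid_iso s a b)"
    by (metis surj_def surj_pair)
qed

lemma nbh_grid_iso: "nbh (grid_iso s a b x) = grid_iso s a b ` nbh x"
proof -
  have "nbh (grid_iso s a b x) = grid_iso s a b ` (grid_iso s a b -` nbh (grid_iso s a b x))"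
    using bij_grid_iso by (simp add: bij_is_surj image_vimage_eq)
  also have "grid_iso s a b -` nbh (grid_iso s a b x) = nbh x"
    by (auto simp: nbh_def king_adj_grid_iso)
  finally show ?thesis .
qed

lemma cnbh_grid_iso: "cnbh (grid_iso s a b x) = grid_iso s a b ` cnbh x"
  by (simp add: cnbh_def nbh_grid_iso)

lemma private_nbh_grid_iso:
  "nbh (grid_iso s a b x) - cnbh (grid_iso s a b y) = grid_iso s a b ` (nbh x - cnbh y)"
  using bij_grid_iso by (simp add: nbh_grid_iso cnbh_grid_iso image_set_diff bij_is_inj)

lemma nbh_diff_subset_grid_iso:
  assumes "nbh w - X \<subseteq> nbh y \<union> nbh y'"
  shows "nbh (grid_iso s a b w) - grid_iso s a b ` X \<subseteq> nbh (grid_iso s a b y) \<union> nbh (grid_iso s a b y')"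
proof -
  have "nbh (grid_iso s a b w) - grid_iso s a b ` X = grid_iso s a b ` (nbh w - X)"
    using bij_grid_iso by (simp add: nbh_grid_iso image_set_diff bij_is_inj)
  also have "\<dots> \<subseteq> grid_iso s a b ` (nbh y \<union> nbh y')"
    using assms by (rule image_mono)
  finally show ?thesis
    by (simp add: image_Un nbh_grid_iso)
qed

lemma card_common_nbh_grid_iso:
  "card (nbh (grid_iso s a b x) \<inter> nbh (grid_iso s a b y)) = card (nbh x \<inter> nbh y)"
proof -
  have "inj (grid_iso s a b)"
    using bij_grid_iso bij_is_inj by blast
  then show ?thesis
    by (simp add: nbh_grid_iso image_Int[symmetric] card_image inj_on_subset[OF _ subset_UNIV])
qed

end

lemma adjacent_cases:
  assumes "king_adj s p"
  obtains a b where "\<bar>a\<bar> = 1" "\<bar>b\<bar> = 1" "p \<in> grid_iso s a b ` {(1, 1), (1, 0), (0, 1)}"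
proof -
  obtain x y where s: "s = (x, y)"
    by fastforce
  define dx where "dx = fst p - x"
  define dy where "dy = snd p - y"
  have sp: "s = (x, y)" "p = (x + dx, y + dy)"
    by (simp_all add: s dx_def dy_def)
  have d: "dx \<in> {-1, 0, 1}" "dy \<in> {-1, 0, 1}" "(dx, dy) \<noteq> (0, 0)"
    using assms by (auto simp: sp king_adj_iff)
  define a where "a = (if dx = 0 then 1 else dx)"
  define b where "b = (if dy = 0 then 1 else dy)"
  have "\<bar>a\<bar> = 1" "\<bar>b\<bar> = 1" "p = grid_iso s a b (\<bar>dx\<bar>, \<bar>dy\<bar>)"
    "(\<bar>dx\<bar>, \<bar>dy\<bar>) \<in> {(1, 1), (1, 0), (0, 1)}"
    using d by (auto simp: a_def b_def grid_iso_def sp)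
  then show thesis
    using that by blast
qed

lemma common_nbh_cases:
  assumes "king_adj s p"
  shows "card (nbh s \<inter> nbh p) = 4 \<or>
    card (nbh s \<inter> nbh p) = 2 \<and> (\<exists>a b. \<bar>a\<bar> = 1 \<and> \<bar>b\<bar> = 1 \<and> p = grid_iso s a b (1, 1))"
proof -
  obtain a b where ab: "\<bar>a\<bar> = 1" "\<bar>b\<bar> = 1" and p: "p \<in> grid_iso s a b ` {(1, 1), (1, 0), (0, 1)}"
    using adjacent_cases[OF assms] .
  have card: "card (nbh s \<inter> nbh (grid_iso s a b z)) = card (nbh (0, 0) \<inter> nbh z)" for z
    using card_common_nbh_grid_iso[OF ab, of s "(0, 0)" z] by (simp add: grid_iso_origin)
  have "nbh (0, 0) \<inter> nbh (1, 1) = {(1, 0), (0, 1)}"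
    "nbh (0, 0) \<inter> nbh (1, 0) = {(0, -1), (0, 1), (1, -1), (1, 1)}"
    "nbh (0, 0) \<inter> nbh (0, 1) = {(-1, 0), (1, 0), (-1, 1), (1, 1)}"
    by (auto simp: nbh_eq)
  then have "card (nbh (0, 0) \<inter> nbh (1, 1)) = 2" "card (nbh (0, 0) \<inter> nbh (1, 0)) = 4"
    "card (nbh (0, 0) \<inter> nbh (0, 1)) = 4"
    by simp_all
  with p ab card show ?thesis
    by (elim imageE insertE) (simp_all, blast)
qed

text \<open>In the coordinates where \<open>s = (0, 0)\<close> and \<open>p = (1, 1)\<close>, the witnesses are
  \<open>(-1, 0)\<close> and \<open>(0, -1)\<close>.\<close>

lemma diagonal_private_nbh:
  assumes ab: "\<bar>a\<bar> = 1" "\<bar>b\<bar> = 1" and p: "p = grid_iso s a b (1, 1)"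
  defines "B \<equiv> nbh s - cnbh p"
  obtains w1 w2 where "w1 \<in> B" "w2 \<in> B" "w1 \<noteq> w2"
    and "\<And>w. w \<in> {w1, w2} \<Longrightarrow> \<exists>y\<in>B - {w}. \<exists>y'\<in>B - {w}. nbh w - insert s B \<subseteq> nbh y \<union> nbh y'"
proof -
  let ?g = "grid_iso s a b"
  define B0 where "B0 = nbh (0, 0) - cnbh (1, 1)"
  have B0: "B0 = {(-1, -1), (-1, 0), (-1, 1), (0, -1), (1, -1)}"
    by (auto simp: B0_def nbh_eq cnbh_def)
  have B: "B = ?g ` B0" and insert_B: "insert s B = ?g ` insert (0, 0) B0"
    using private_nbh_grid_iso[OF ab, of s "(0, 0)" "(1, 1)"]
    by (simp_all add: B_def B0_def p grid_iso_origin)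
  have cover1: "nbh (?g (-1, 0)) - insert s B \<subseteq> nbh (?g (-1, -1)) \<union> nbh (?g (-1, 1))"
    unfolding insert_B by (rule nbh_diff_subset_grid_iso[OF ab]) (auto simp: B0 nbh_eq)
  have cover2: "nbh (?g (0, -1)) - insert s B \<subseteq> nbh (?g (-1, -1)) \<union> nbh (?g (1, -1))"
    unfolding insert_B by (rule nbh_diff_subset_grid_iso[OF ab]) (auto simp: B0 nbh_eq)
  have "inj ?g"
    using bij_grid_iso[OF ab] bij_is_inj by blast
  then have g_eq: "?g x = ?g y \<longleftrightarrow> x = y" for x y
    by (simp add: inj_eq)
  have mem: "?g (-1, 0) \<in> B" "?g (0, -1) \<in> B" "?g (-1, 0) \<noteq> ?g (0, -1)"
    "?g (-1, -1) \<in> B - {?g (-1, 0)}" "?g (-1, 1) \<in> B - {?g (-1, 0)}"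
    "?g (-1, -1) \<in> B - {?g (0, -1)}" "?g (1, -1) \<in> B - {?g (0, -1)}"
    unfolding B B0 by (simp_all add: g_eq)
  show thesis
  proof (rule that)
    fix w
    assume "w \<in> {?g (-1, 0), ?g (0, -1)}"
    then show "\<exists>y\<in>B - {w}. \<exists>y'\<in>B - {w}. nbh w - insert s B \<subseteq> nbh y \<union> nbh y'"
      by (elim insertE emptyE) (use cover1 cover2 mem in blast)+
  qed (fact mem)+
qed

section \<open>Squares and density\<close>

definition grid_square :: "nat \<Rightarrow> vtx set" where
  "grid_square k = {- int k..int k} \<times> {- int k..int k}"

lemma finite_grid_square: "finite (grid_square k)"
  by (simp add: grid_square_def)

lemma card_grid_square: "card (grid_square k) = (2 * k + 1)\<^sup>2"
proof -
  have "nat (int k - - int k + 1) = 2 * k + 1"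
    by simp
  then show ?thesis
    by (simp add: grid_square_def card_cartesian_product power2_eq_square)
qed

lemma king_walk_displacement:
  "(u, x) \<in> king_edges ^^ n \<Longrightarrow> \<bar>fst x - fst u\<bar> \<le> int n \<and> \<bar>snd x - snd u\<bar> \<le> int n"
proof (induction n arbitrary: x)
  case 0
  then show ?case
    by simp
next
  case (Suc n)
  then obtain y where y: "(u, y) \<in> king_edges ^^ n" "king_adj y x"
    by (auto simp: king_edges_def)
  then have "\<bar>fst x - fst y\<bar> \<le> 1" "\<bar>snd x - snd y\<bar> \<le> 1"
    using king_adj_iff[of "fst y" "snd y" "fst x" "snd x"] by (auto simp: abs_minus_commute)
  then show ?case
    using Suc.IH[OF y(1)] by auto
qed

lemma king_walk_from_origin:
  "max \<bar>a\<bar> \<bar>b\<bar> = int n \<Longrightarrow> ((0, 0), (a, b)) \<in> king_edges ^^ n"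
proof (induction n arbitrary: a b)
  case 0
  then show ?case
    by (auto simp: max_def split: if_splits)
next
  case (Suc n)
  have "max \<bar>a - sgn a\<bar> \<bar>b - sgn b\<bar> = int n"
    using Suc.prems by (auto simp: sgn_if abs_if max_def split: if_splits)
  moreover have "king_adj (a - sgn a, b - sgn b) (a, b)"
    using Suc.prems by (auto simp: king_adj_iff sgn_if abs_if max_def split: if_splits)
  ultimately show ?case
    using Suc.IH by (auto simp: king_edges_def)
qed

lemma gball_origin: "gball k (0, 0) = grid_square k"
proof (intro set_eqI iffI)
  fix x
  assume "x \<in> gball k (0, 0)"
  then obtain n where "n \<le> k" "((0, 0), x) \<in> king_edges ^^ n"
    by (auto simp: gball_def)
  then show "x \<in> grid_square k"
    using king_walk_displacement[of "(0, 0)" x n] by (cases x) (auto simp: grid_square_def)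
next
  fix x
  assume "x \<in> grid_square k"
  then obtain a b where x: "x = (a, b)" "\<bar>a\<bar> \<le> int k" "\<bar>b\<bar> \<le> int k"
    by (auto simp: grid_square_def)
  then have "nat (max \<bar>a\<bar> \<bar>b\<bar>) \<le> k" "((0, 0), x) \<in> king_edges ^^ nat (max \<bar>a\<bar> \<bar>b\<bar>)"
    by (auto intro!: king_walk_from_origin)
  then show "x \<in> gball k (0, 0)"
    by (auto simp: gball_def)
qed

lemma cnbh_grid_square: "u \<in> grid_square k \<Longrightarrow> cnbh u \<subseteq> grid_square (Suc k)"
  by (cases u) (auto simp: grid_square_def cnbh_def nbh_eq)

lemma grid_square_ratio_tendsto:
  "(\<lambda>k. real (card (grid_square k)) / real (card (grid_square (Suc k)))) \<longlonglongrightarrow> 1"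
proof -
  have "(\<lambda>k. (2 * real k + 1)\<^sup>2 / (2 * real k + 3)\<^sup>2) \<longlonglongrightarrow> 1"
    by real_asymp
  then show ?thesis
    by (simp add: card_grid_square algebra_simps)
qed

lemma density_eq_limsup_Suc:
  "density A = limsup (\<lambda>k. ereal (real (card (A \<inter> grid_square (Suc k))) / real (card (grid_square (Suc k)))))"
  using limsup_shift[of "\<lambda>k. ereal (real (card (A \<inter> grid_square k)) / real (card (grid_square k)))"]
  by (simp add: density_def gball_origin)

lemma weighted_density_ge_1:
  fixes T U :: "vtx set" and \<alpha> \<beta> :: real
  assumes "0 \<le> \<alpha>" "0 \<le> \<beta>"
    and bound: "\<And>k. real (card (grid_square k))
      \<le> \<alpha> * real (card (T \<inter> grid_square (Suc k))) + \<beta> * real (card (U \<inter> grid_square (Suc k)))"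
  shows "1 \<le> ereal \<alpha> * density T + ereal \<beta> * density U"
proof -
  define q where "q k = real (card (grid_square (Suc k)))" for k
  define t where "t k = real (card (T \<inter> grid_square (Suc k))) / q k" for k
  define u where "u k = real (card (U \<inter> grid_square (Suc k))) / q k" for k
  have ratio: "real (card (grid_square k)) / q k \<le> \<alpha> * t k + \<beta> * u k" for k
  proof -
    have "q k > 0"
      by (simp add: q_def card_grid_square)
    then have "real (card (grid_square k)) / q k
        \<le> (\<alpha> * real (card (T \<inter> grid_square (Suc k))) + \<beta> * real (card (U \<inter> grid_square (Suc k)))) / q k"
      using bound[of k] by (simp add: divide_right_mono)
    then show ?thesis
      by (simp add: t_def u_def add_divide_distrib)
  qed
  have "(\<lambda>k. ereal (real (card (grid_square k)) / q k)) \<longlonglongrightarrow> ereal 1"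
    using grid_square_ratio_tendsto by (simp add: q_def)
  then have "limsup (\<lambda>k. ereal (real (card (grid_square k)) / q k)) = 1"
    unfolding one_ereal_def by (rule lim_imp_Limsup[OF trivial_limit_sequentially])
  then have "1 = limsup (\<lambda>k. ereal (real (card (grid_square k)) / q k))"
    by simp
  also have "\<dots> \<le> limsup (\<lambda>k. ereal \<alpha> * ereal (t k) + ereal \<beta> * ereal (u k))"
    using ratio by (intro Limsup_mono always_eventually) simp
  also have "\<dots> \<le> limsup (\<lambda>k. ereal \<alpha> * ereal (t k)) + limsup (\<lambda>k. ereal \<beta> * ereal (u k))"
    by (rule ereal_limsup_add_mono)
  also have "\<dots> = ereal \<alpha> * limsup (\<lambda>k. ereal (t k)) + ereal \<beta> * limsup (\<lambda>k. ereal (u k))"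
    using assms(1,2) by (simp only: Limsup_ereal_mult_left[OF trivial_limit_sequentially])
  also have "\<dots> = ereal \<alpha> * density T + ereal \<beta> * density U"
    by (simp only: density_eq_limsup_Suc t_def u_def q_def)
  finally show ?thesis .
qed

section \<open>Discharging\<close>

definition dom_count :: "vtx set \<Rightarrow> vtx \<Rightarrow> nat" where
  "dom_count S u = card (cnbh u \<inter> S)"

definition share :: "vtx set \<Rightarrow> vtx \<Rightarrow> real" where
  "share S s = (\<Sum>u\<in>cnbh s. 1 / real (dom_count S u))"

lemma card_le_dom_count: "T \<subseteq> cnbh u \<inter> S \<Longrightarrow> card T \<le> dom_count S u"
  unfolding dom_count_def by (rule card_mono) (simp_all add: finite_cnbh)

lemma inverse_dom_count_le: "1 / real (dom_count S u) \<le> 1 / real n" if "0 < n" "n \<le> dom_count S u"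
  using that by (intro frac_le) simp_all

lemma other_dominator:
  assumes "1 < dom_count S w"
  obtains t where "t \<in> cnbh w" "t \<in> S" "t \<noteq> s"
proof -
  have "\<not> cnbh w \<inter> S \<subseteq> {s}"
  proof
    assume "cnbh w \<inter> S \<subseteq> {s}"
    then have "dom_count S w \<le> card {s}"
      unfolding dom_count_def by (intro card_mono) auto
    with assms show False
      by simp
  qed
  then show thesis
    using that by blast
qed

lemma card_grid_square_le_sum_share:
  assumes dominating: "\<And>v. cnbh v \<inter> S \<noteq> {}"
  shows "real (card (grid_square k)) \<le> (\<Sum>s\<in>S \<inter> grid_square (Suc k). share S s)"
proof -
  let ?Q = "grid_square k" and ?Q' = "S \<inter> grid_square (Suc k)"
  have "real (card ?Q) = (\<Sum>u\<in>?Q. \<Sum>s\<in>cnbh u \<inter> S. 1 / real (dom_count S u))"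
    using dominating by (simp add: dom_count_def finite_cnbh)
  also have "\<dots> = (\<Sum>u\<in>?Q. \<Sum>s\<in>{s\<in>?Q'. s \<in> cnbh u}. 1 / real (dom_count S u))"
    using cnbh_grid_square by (intro sum.cong refl) auto
  also have "\<dots> = (\<Sum>s\<in>?Q'. \<Sum>u\<in>{u\<in>?Q. s \<in> cnbh u}. 1 / real (dom_count S u))"
    by (rule sum.swap_restrict) (simp_all add: finite_grid_square)
  also have "\<dots> \<le> (\<Sum>s\<in>?Q'. share S s)"
    unfolding share_def
    by (intro sum_mono sum_mono2) (auto simp: finite_cnbh cnbh_sym)
  finally show ?thesis .
qed

section \<open>Shares in a locating-paired-dominating set\<close>

lemma sum_inverse_le:
  fixes c :: "'a \<Rightarrow> nat"
  assumes I: "finite I" and k: "0 < k" and ge: "\<And>i. i \<in> I \<Longrightarrow> k \<le> c i"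
    and sep: "\<And>i j. i \<in> I \<Longrightarrow> j \<in> I \<Longrightarrow> i \<noteq> j \<Longrightarrow> k < c i \<or> k < c j"
  shows "(\<Sum>i\<in>I. 1 / real (c i)) \<le> 1 / real k + (real (card I) - 1) / real (k + 1)"
proof -
  have small: "1 / real (c i) \<le> 1 / real (k + 1)" if "k < c i" for i
    using that by (intro frac_le) simp_all
  show ?thesis
  proof (cases "\<exists>i\<in>I. c i \<le> k")
    case True
    then obtain i where i: "i \<in> I" "c i = k"
      using ge le_antisym by blast
    have "(\<Sum>j\<in>I - {i}. 1 / real (c j)) \<le> real (card (I - {i})) * (1 / real (k + 1))"
    proof (rule sum_bounded_above)
      fix j
      assume "j \<in> I - {i}"
      then have "k < c j"
        using sep[of i j] i by auto
      then show "1 / real (c j) \<le> 1 / real (k + 1)"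
        by (rule small)
    qed
    moreover have "real (card (I - {i})) = real (card I) - 1"
      using card.remove[OF I i(1)] by simp
    moreover have "(\<Sum>j\<in>I. 1 / real (c j)) = 1 / real k + (\<Sum>j\<in>I - {i}. 1 / real (c j))"
      using sum.remove[OF I i(1), of "\<lambda>j. 1 / real (c j)"] i(2) by simp
    ultimately show ?thesis
      by simp
  next
    case False
    then have "(\<Sum>i\<in>I. 1 / real (c i)) \<le> real (card I) * (1 / real (k + 1))"
      using small by (intro sum_bounded_above) (simp add: not_le)
    moreover have "1 / real (k + 1) \<le> 1 / real k"
      using k by (intro frac_le) simp_all
    moreover have "real (card I) * (1 / real (k + 1)) = 1 / real (k + 1) + (real (card I) - 1) / real (k + 1)"
      by (simp add: field_simps)
    ultimately show ?thesis
      by linarith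
  qed
qed

locale king_lpds =
  fixes S :: "vtx set" and m :: "vtx \<Rightarrow> vtx"
  assumes lpds: "is_LPDS S" and matching: "perfect_matching_on S m"
begin

lemma partner: "v \<in> S \<Longrightarrow> m v \<in> S \<and> king_adj v (m v) \<and> m (m v) = v"
  using matching by (simp add: perfect_matching_on_def)

lemma dominating: "cnbh v \<inter> S \<noteq> {}"
  using lpds unfolding is_LPDS_def by blast

lemma locating: "u \<notin> S \<Longrightarrow> v \<notin> S \<Longrightarrow> u \<noteq> v \<Longrightarrow> nbh u \<inter> S \<noteq> nbh v \<inter> S"
  using lpds unfolding is_LPDS_def by blast

lemma dom_count_partner: "2 \<le> dom_count S u" if "u \<in> S"
proof -
  have "u \<noteq> m u" "m u \<in> nbh u" "m u \<in> S"
    using partner[OF that] by (auto simp: nbh_def)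
  then have "{u, m u} \<subseteq> cnbh u \<inter> S" "card {u, m u} = 2"
    using that by (auto simp: cnbh_def)
  then show ?thesis
    using card_le_dom_count by metis
qed

lemma inverse_dom_count_matched: "1 / real (dom_count S v) \<le> 1 / 2" if "v \<in> S"
  using inverse_dom_count_le[where n = 2 and u = v] dom_count_partner[OF that] by simp

lemma dom_count_matched_nbh:
  assumes "u \<in> S" "s \<in> S" "king_adj u s" "m s \<noteq> u"
  shows "3 \<le> dom_count S u"
proof -
  have "u \<noteq> m u" "u \<noteq> s" "m u \<noteq> s" "m u \<in> nbh u" "m u \<in> S"
    using assms partner[OF assms(1)] by (auto simp: nbh_def)
  then have "{u, m u, s} \<subseteq> cnbh u \<inter> S" "card {u, m u, s} = 3"
    using assms by (auto simp: cnbh_def nbh_def)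
  then show ?thesis
    using card_le_dom_count by metis
qed

lemma locating_dom_count:
  assumes "u \<notin> S" "v \<notin> S" "u \<noteq> v" "finite T" "T \<subseteq> S" "T \<subseteq> nbh u" "T \<subseteq> nbh v"
  shows "card T < dom_count S u \<or> card T < dom_count S v"
proof (rule ccontr)
  have dominated_by_T: "T = nbh x \<inter> S" if "x \<notin> S" "T \<subseteq> nbh x" "dom_count S x \<le> card T" for x
  proof (rule card_seteq)
    show "finite (nbh x \<inter> S)"
      by (simp add: finite_nbh)
    show "T \<subseteq> nbh x \<inter> S"
      using that(2) assms(5) by blast
    have "cnbh x \<inter> S = nbh x \<inter> S"
      using that(1) by (auto simp: cnbh_def)
    then show "card (nbh x \<inter> S) \<le> card T"
      using that(3) by (simp add: dom_count_def)
  qed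
  assume "\<not> ?thesis"
  then have "T = nbh u \<inter> S" "T = nbh v \<inter> S"
    using dominated_by_T assms(1,2,6,7) by (simp_all add: not_less)
  then show False
    using locating[OF assms(1-3)] by simp
qed

lemma private_nbh_dom_count:
  assumes "s \<in> S" "u \<noteq> v" "u \<in> nbh s" "v \<in> nbh s"
  shows "1 < dom_count S u \<or> 1 < dom_count S v"
proof (cases "u \<in> S \<or> v \<in> S")
  case True
  then show ?thesis
    using dom_count_partner[of u] dom_count_partner[of v] by auto
next
  case False
  then show ?thesis
    using locating_dom_count[of u v "{s}"] assms by (simp add: nbh_sym)
qed

lemma common_nbh_dom_count:
  assumes "s \<in> S" "u \<noteq> v" "u \<in> nbh s \<inter> nbh (m s)" "v \<in> nbh s \<inter> nbh (m s)"
  shows "2 < dom_count S u \<or> 2 < dom_count S v"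
proof (cases "u \<in> S \<or> v \<in> S")
  case True
  have "3 \<le> dom_count S x" if "x \<in> S" "x \<in> nbh s \<inter> nbh (m s)" for x
  proof (rule dom_count_matched_nbh)
    show "king_adj x s" "m s \<noteq> x"
      using that(2) by (auto simp: nbh_def king_adj_sym)
  qed (use that assms(1) in simp_all)
  then show ?thesis
    using True assms(3,4) by fastforce
next
  case False
  have "s \<noteq> m s" "m s \<in> S"
    using partner[OF assms(1)] king_adj_irrefl by metis+
  moreover have "{s, m s} \<subseteq> nbh u" "{s, m s} \<subseteq> nbh v"
    using assms(3,4) by (auto simp: nbh_sym)
  ultimately show ?thesis
    using locating_dom_count[of u v "{s, m s}"] False assms(1,2) by (simp add: numeral_2_eq_2)
qed

lemma partner_nbh: "s \<in> S \<Longrightarrow> m s \<in> nbh s"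
  using partner by (simp add: nbh_def)

lemma nbh_partner_split:
  assumes "s \<in> S"
  shows "nbh s = insert (m s) ((nbh s \<inter> nbh (m s)) \<union> (nbh s - cnbh (m s)))"
  using partner_nbh[OF assms] by (auto simp: cnbh_def)

lemma share_split:
  assumes "s \<in> S"
  shows "share S s = 1 / real (dom_count S s) + 1 / real (dom_count S (m s))
    + (\<Sum>u\<in>nbh s \<inter> nbh (m s). 1 / real (dom_count S u))
    + (\<Sum>u\<in>nbh s - cnbh (m s). 1 / real (dom_count S u))"
proof -
  have "cnbh s = insert s (insert (m s) ((nbh s \<inter> nbh (m s)) \<union> (nbh s - cnbh (m s))))"
    using nbh_partner_split[OF assms] by (simp add: cnbh_def)
  moreover have "s \<noteq> m s" "(nbh s \<inter> nbh (m s)) \<inter> (nbh s - cnbh (m s)) = {}"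
    using partner_nbh[OF assms] by (auto simp: cnbh_def)
  ultimately show ?thesis
    unfolding share_def by (simp add: sum.union_disjoint finite_nbh cnbh_def add.assoc)
qed

lemma card_common_private_nbh:
  assumes "s \<in> S"
  shows "card (nbh s \<inter> nbh (m s)) + card (nbh s - cnbh (m s)) = 7"
proof -
  have "(nbh s \<inter> nbh (m s)) \<inter> (nbh s - cnbh (m s)) = {}"
    by (auto simp: cnbh_def)
  then have "card (nbh s) = Suc (card (nbh s \<inter> nbh (m s)) + card (nbh s - cnbh (m s)))"
    by (subst nbh_partner_split[OF assms]) (simp add: card_Un_disjoint finite_nbh cnbh_def)
  then show ?thesis
    by (simp add: card_nbh)
qed

lemma sum_common_nbh_le:
  assumes "s \<in> S"
  shows "(\<Sum>u\<in>nbh s \<inter> nbh (m s). 1 / real (dom_count S u))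
    \<le> 1 / 2 + (real (card (nbh s \<inter> nbh (m s))) - 1) / 3"
proof -
  have "2 \<le> dom_count S u" if "u \<in> nbh s \<inter> nbh (m s)" for u
  proof -
    have "s \<noteq> m s"
      using partner_nbh[OF assms] by auto
    then have "{s, m s} \<subseteq> cnbh u \<inter> S" "card {s, m s} = 2"
      using that assms partner[OF assms] by (auto simp: cnbh_def nbh_sym)
    then show ?thesis
      using card_le_dom_count by metis
  qed
  then show ?thesis
    using sum_inverse_le[of "nbh s \<inter> nbh (m s)" 2 "dom_count S"] common_nbh_dom_count[OF assms]
    by (simp add: finite_nbh)
qed

lemma sum_private_nbh_le:
  assumes "s \<in> S" "X \<subseteq> nbh s"
  shows "(\<Sum>u\<in>X. 1 / real (dom_count S u)) \<le> 1 + (real (card X) - 1) / 2"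
proof -
  have "finite X"
    using assms(2) finite_nbh finite_subset by blast
  moreover have "1 \<le> dom_count S u" if "u \<in> X" for u
    using card_le_dom_count[of "{s}" u S] that assms by (auto simp: cnbh_def nbh_sym)
  moreover have "1 < dom_count S u \<or> 1 < dom_count S v" if "u \<in> X" "v \<in> X" "u \<noteq> v" for u v
    using private_nbh_dom_count[OF assms(1) that(3)] that(1,2) assms(2) by blast
  ultimately show ?thesis
    using sum_inverse_le[of X 1 "dom_count S"] by simp
qed

lemma light_private_nbh_outside:
  assumes "s \<in> S" "u \<in> nbh s - cnbh (m s)" "dom_count S u \<le> 2"
  shows "u \<notin> S"
proof
  assume "u \<in> S"
  moreover have "king_adj u s" "m s \<noteq> u"
    using assms(2) by (auto simp: cnbh_def nbh_def king_adj_sym)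
  ultimately have "3 \<le> dom_count S u"
    using dom_count_matched_nbh assms(1) by blast
  with assms(3) show False
    by simp
qed

text \<open>If every private neighbour were dominated at most twice, all of them would lie
  outside \<open>S\<close>; one of the two witnesses \<open>w\<close> of \<open>diagonal_private_nbh\<close> has a second
  dominator \<open>t\<close>, which also dominates another private neighbour \<open>y\<close>, and then
  \<open>{s, t}\<close> dominates both \<open>w\<close> and \<open>y\<close> exactly, contradicting the locating property.\<close>

lemma diagonal_heavy_private_nbh:
  assumes s: "s \<in> S" and diagonal: "card (nbh s \<inter> nbh (m s)) = 2"
  shows "\<exists>u\<in>nbh s - cnbh (m s). 3 \<le> dom_count S u"
proof (rule ccontr)
  define B where "B = nbh s - cnbh (m s)"
  assume no_heavy: "\<not> ?thesis"
  have light: "dom_count S u \<le> 2" if "u \<in> B" for u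
  proof -
    have "\<not> 3 \<le> dom_count S u"
      using no_heavy that unfolding B_def by blast
    then show ?thesis
      by simp
  qed
  have outside: "u \<notin> S" if "u \<in> B" for u
    using light_private_nbh_outside[OF s] light that unfolding B_def by blast
  obtain a b where "\<bar>a\<bar> = 1" "\<bar>b\<bar> = 1" "m s = grid_iso s a b (1, 1)"
    using common_nbh_cases[of s "m s"] partner[OF s] diagonal by auto
  then obtain w1 w2 where w: "w1 \<in> B" "w2 \<in> B" "w1 \<noteq> w2"
    and cover: "\<And>w. w \<in> {w1, w2} \<Longrightarrow> \<exists>y\<in>B - {w}. \<exists>y'\<in>B - {w}. nbh w - insert s B \<subseteq> nbh y \<union> nbh y'"
    unfolding B_def by (rule diagonal_private_nbh) blast
  have "w1 \<in> nbh s" "w2 \<in> nbh s"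
    using w(1,2) by (simp_all add: B_def)
  then have "1 < dom_count S w1 \<or> 1 < dom_count S w2"
    using private_nbh_dom_count[OF s w(3)] by blast
  then obtain w where w12: "w \<in> {w1, w2}" and "1 < dom_count S w"
    by blast
  then obtain t where t: "t \<in> cnbh w" "t \<in> S" "t \<noteq> s"
    using other_dominator[of S w s] by blast
  have wB: "w \<in> B"
    using w w12 by auto
  have "w \<notin> S" "t \<notin> B"
    using outside wB t(2) by blast+
  with t have "t \<in> nbh w - insert s B"
    by (auto simp: cnbh_def)
  then obtain y where y: "y \<in> B" "y \<noteq> w" "t \<in> nbh y"
    using cover[OF w12] by blast
  have "{s, t} \<subseteq> nbh w" "{s, t} \<subseteq> nbh y"
    using wB y \<open>t \<in> nbh w - insert s B\<close> by (auto simp: B_def nbh_sym)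
  then have "2 < dom_count S w \<or> 2 < dom_count S y"
    using locating_dom_count[of w y "{s, t}"] outside[OF wB] outside[OF y(1)] y(2) t s
    by (simp add: numeral_2_eq_2)
  then show False
    using light wB y(1) by fastforce
qed

lemma share_le_orthogonal:
  assumes s: "s \<in> S" and orthogonal: "card (nbh s \<inter> nbh (m s)) = 4"
  shows "share S s \<le> 9 / 2"
proof -
  have "card (nbh s - cnbh (m s)) = 3"
    using card_common_private_nbh[OF s] orthogonal by simp
  then have "(\<Sum>u\<in>nbh s - cnbh (m s). 1 / real (dom_count S u)) \<le> 2"
    using sum_private_nbh_le[OF s, of "nbh s - cnbh (m s)"] by simp
  moreover have "(\<Sum>u\<in>nbh s \<inter> nbh (m s). 1 / real (dom_count S u)) \<le> 3 / 2"
    using sum_common_nbh_le[OF s] orthogonal by simp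
  moreover have "1 / real (dom_count S s) \<le> 1 / 2" "1 / real (dom_count S (m s)) \<le> 1 / 2"
    using inverse_dom_count_matched partner s by simp_all
  ultimately show ?thesis
    unfolding share_split[OF s] by linarith
qed

lemma share_le_diagonal:
  assumes s: "s \<in> S" and diagonal: "card (nbh s \<inter> nbh (m s)) = 2"
  shows "share S s \<le> 14 / 3"
proof -
  define B where "B = nbh s - cnbh (m s)"
  obtain u where u: "u \<in> B" "3 \<le> dom_count S u"
    using diagonal_heavy_private_nbh[OF s diagonal] unfolding B_def ..
  have "card B = 5"
    using card_common_private_nbh[OF s] diagonal by (simp add: B_def)
  then have "card (B - {u}) = 4"
    using u(1) by simp
  moreover have "B - {u} \<subseteq> nbh s"
    by (auto simp: B_def)
  ultimately have "(\<Sum>v\<in>B - {u}. 1 / real (dom_count S v)) \<le> 5 / 2"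
    using sum_private_nbh_le[OF s, of "B - {u}"] by simp
  moreover have "1 / real (dom_count S u) \<le> 1 / 3"
    using inverse_dom_count_le[where n = 3] u(2) by simp
  moreover have "(\<Sum>v\<in>B. 1 / real (dom_count S v))
      = 1 / real (dom_count S u) + (\<Sum>v\<in>B - {u}. 1 / real (dom_count S v))"
    using sum.remove[of B u "\<lambda>v. 1 / real (dom_count S v)"] u(1) by (simp add: B_def finite_nbh)
  moreover have "(\<Sum>u\<in>nbh s \<inter> nbh (m s). 1 / real (dom_count S u)) \<le> 5 / 6"
    using sum_common_nbh_le[OF s] diagonal by simp
  moreover have "1 / real (dom_count S s) \<le> 1 / 2" "1 / real (dom_count S (m s)) \<le> 1 / 2"
    using inverse_dom_count_matched partner s by simp_all
  ultimately show ?thesis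
    unfolding share_split[OF s] B_def by linarith
qed

lemma card_common_nbh_partner: "s \<in> S \<Longrightarrow> card (nbh s \<inter> nbh (m s)) \<in> {2, 4}"
  using common_nbh_cases partner by blast

lemma card_grid_square_le:
  defines "S\<^sub>1 \<equiv> {v \<in> S. card (nbh v \<inter> nbh (m v)) = 2}" and "S\<^sub>2 \<equiv> {v \<in> S. card (nbh v \<inter> nbh (m v)) = 4}"
  shows "real (card (grid_square k))
    \<le> 14 / 3 * real (card (S\<^sub>1 \<inter> grid_square (Suc k))) + 9 / 2 * real (card (S\<^sub>2 \<inter> grid_square (Suc k)))"
proof -
  let ?Q = "S \<inter> grid_square (Suc k)"
  have "real (card (grid_square k)) \<le> (\<Sum>s\<in>?Q. share S s)"
    using dominating by (rule card_grid_square_le_sum_share)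
  also have "\<dots> \<le> (\<Sum>s\<in>?Q. if s \<in> S\<^sub>1 then 14 / 3 else 9 / 2)"
  proof (rule sum_mono)
    fix s
    assume "s \<in> ?Q"
    then show "share S s \<le> (if s \<in> S\<^sub>1 then 14 / 3 else 9 / 2)"
      using card_common_nbh_partner[of s] share_le_diagonal[of s] share_le_orthogonal[of s]
      by (auto simp: S\<^sub>1_def)
  qed
  also have "\<dots> = 14 / 3 * real (card (S\<^sub>1 \<inter> grid_square (Suc k))) + 9 / 2 * real (card (S\<^sub>2 \<inter> grid_square (Suc k)))"
  proof -
    have "?Q \<inter> {s. s \<in> S\<^sub>1} = S\<^sub>1 \<inter> grid_square (Suc k)"
      "?Q \<inter> - {s. s \<in> S\<^sub>1} = S\<^sub>2 \<inter> grid_square (Suc k)"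
      using card_common_nbh_partner by (auto simp: S\<^sub>1_def S\<^sub>2_def)
    then show ?thesis
      by (simp add: sum.If_cases finite_grid_square)
  qed
  finally show ?thesis .
qed

end

theorem theorem1:
  fixes S :: "vtx set" and m :: "vtx \<Rightarrow> vtx"
  assumes "is_LPDS S"
    and "perfect_matching_on S m"
  shows "ereal (14/3) * density {v\<in>S. card (nbh v \<inter> nbh (m v)) = 2}
          + ereal (9/2) * density {v\<in>S. card (nbh v \<inter> nbh (m v)) = 4} \<ge> 1"
proof -
  interpret king_lpds S m
    using assms by unfold_locales
  show ?thesis
    by (rule weighted_density_ge_1[OF _ _ card_grid_square_le]) simp_all
qed

end
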